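(* Let $a>0$, $\gamma>1$, $b>0$, and set $v_{1,1}=a$, $v_{2,1}=\gamma a$, $w_{1,1}=w_{2,1}=b$. Then $2\omega_-(\vartheta)\neq\omega_-(2\vartheta)$ for all $\vartheta\in(-\pi,\pi]$.
   Context: With $c_i:=2v_{i,1}+w_{i,1}$, for $\vartheta\in\mathbb R$ define $$\omega_\pm(\vartheta):=\sqrt{\tfrac12\Big(c_1+c_2\pm\sqrt{(c_1-c_2)^2+8v_{1,1}v_{2,1}(\cos\vartheta+1)}\Big)}.$$ *)

theory Defs
  imports Complex_Main
begin

definition omega_minus :: "real \<Rightarrow> real \<Rightarrow> real \<Rightarrow> real \<Rightarrow> real \<Rightarrow> real" where
  "omega_minus v11 v21 w11 w21 \<theta> =
     (let c1 = 2 * v11 + w11; c2 = 2 * v21 + w21 in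
      sqrt ((1/2) * (c1 + c2 - sqrt ((c1 - c2)^2 + 8 * v11 * v21 * (cos \<theta> + 1)))))"

definition omega_plus :: "real \<Rightarrow> real \<Rightarrow> real \<Rightarrow> real \<Rightarrow> real \<Rightarrow> real" where
  "omega_plus v11 v21 w11 w21 \<theta> =
     (let c1 = 2 * v11 + w11; c2 = 2 * v21 + w21 in
      sqrt ((1/2) * (c1 + c2 + sqrt ((c1 - c2)^2 + 8 * v11 * v21 * (cos \<theta> + 1)))))"

end

theory Submission
  imports Defs
begin

(* Write c_i = 2 v_i + w_i, D = (c_1 - c_2)^2, k = 8 v_1 v_2 and x = cos t + 1,
   so that 2 omega_-(t)^2 = (c_1 + c_2) - sqrt (D + k x), with x in [0, 2].  Since
   cos (2t) + 1 = 2 (x - 1)^2, the claim 2 omega_-(t) > omega_-(2t) amounts to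
     3 (c_1 + c_2) > 4 sqrt (D + k x) - sqrt (D + 2 k (x - 1)^2).
   The purely real inequality 4 sqrt (D + k x) <= 3 sqrt (D + 2k) + sqrt (D + 2k (x-1)^2)
   (lemma sqrt_double_angle_bound) together with sqrt (D + 2k) < c_1 + c_2, which holds
   because (c_1 + c_2)^2 - (c_1 - c_2)^2 = 4 c_1 c_2 > 16 v_1 v_2 for positive w_i,
   gives the strict inequality for all positive v_i, w_i and every angle
   (lemma omega_minus_double_angle_less).  The paper's statement is the special case
   v_1 = a, v_2 = gamma a, w_1 = w_2 = b. *)

text \<open>Comparison of the two square roots appearing at x and at the doubled angle:
  for x in [1, 2] it follows from squaring, for x below 1 the left side is nonpositive.\<close>
lemma shifted_sqrt_bound:
  fixes D k x :: real
  assumes D: "D \<ge> 0" and k: "k > 0" and x0: "0 \<le> x" and x2: "x \<le> 2"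
  shows "(x - 1) * sqrt (D + k*x) \<le> sqrt (D + 2*k*(x - 1)^2)"
proof (cases "x \<le> 1")
  case True
  then have "(x - 1) * sqrt (D + k*x) \<le> 0"
    using D k x0 by (simp add: mult_nonpos_nonneg)
  moreover have "0 \<le> sqrt (D + 2*k*(x - 1)^2)" using D k by simp
  ultimately show ?thesis by linarith
next
  case False
  have sq: "(x - 1)^2 \<le> 1" using False x2 by (intro power_le_one) auto
  have "((x - 1) * sqrt (D + k*x))^2 = (x - 1)^2 * D + (x - 1)^2 * (k*x)"
    using D k x0 by (simp add: power_mult_distrib distrib_left)
  also have "\<dots> \<le> D + (x - 1)^2 * (2*k)"
    using sq D k x2 by (intro add_mono mult_left_le_one_le mult_left_mono) auto
  also have "\<dots> = (sqrt (D + 2*k*(x - 1)^2))^2"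
    using D k by (simp add: algebra_simps)
  finally show ?thesis by (rule power2_le_imp_le) (use D k in simp)
qed

text \<open>With s2, sx, sy the three square roots,
  it is equivalent to s2 - sy <= 4 (s2 - sx); both differences factor through
  a difference of squares, and the resulting quotients are compared using
  shifted_sqrt_bound.\<close>
lemma sqrt_double_angle_bound:
  fixes D k x :: real
  assumes D: "D \<ge> 0" and k: "k > 0" and x0: "0 \<le> x" and x2: "x \<le> 2"
  shows "4 * sqrt (D + k*x) \<le> 3 * sqrt (D + 2*k) + sqrt (D + 2*k*(x - 1)^2)"
proof -
  define s2 where "s2 = sqrt (D + 2*k)"
  define sx where "sx = sqrt (D + k*x)"
  define sy where "sy = sqrt (D + 2*k*(x - 1)^2)"
  have s2_pos: "s2 > 0" and sx_nonneg: "sx \<ge> 0" and sy_nonneg: "sy \<ge> 0"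
    using D k x0 by (simp_all add: s2_def sx_def sy_def)
  have sx_le: "sx \<le> s2" using k x2 by (simp add: sx_def s2_def)
  have s2_sq: "s2^2 = D + 2*k" and sx_sq: "sx^2 = D + k*x"
    and sy_sq: "sy^2 = D + 2*k*(x - 1)^2"
    using D k x0 by (simp_all add: s2_def sx_def sy_def)
  have diff_x: "(s2 - sx) * (s2 + sx) = k * (2 - x)"
    using s2_sq sx_sq by (simp add: algebra_simps power2_eq_square)
  have diff_y: "(s2 - sy) * (s2 + sy) = 2*k*x * (2 - x)"
    using s2_sq sy_sq by (simp add: algebra_simps power2_eq_square)
  have "(x - 1) * sx \<le> sy"
    unfolding sx_def sy_def by (rule shifted_sqrt_bound[OF D k x0 x2])
  moreover have "(2 - x) * sx \<le> (2 - x) * s2" using x2 sx_le by (intro mult_left_mono) auto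
  ultimately have sums: "x * (s2 + sx) \<le> 2 * (s2 + sy)" by (simp add: algebra_simps)
  have pos: "s2 + sx > 0" "s2 + sy > 0" using s2_pos sx_nonneg sy_nonneg by auto
  have "s2 - sy = 2*k*(2 - x) * x / (s2 + sy)" using diff_y pos by (simp add: field_simps)
  also have "\<dots> \<le> 2*k*(2 - x) * 2 / (s2 + sx)"
  proof -
    have "(2*k*(2 - x)) * (x * (s2 + sx)) \<le> (2*k*(2 - x)) * (2 * (s2 + sy))"
      using sums k x2 by (intro mult_left_mono) auto
    then show ?thesis using pos by (simp add: divide_simps algebra_simps)
  qed
  also have "\<dots> = 4 * (s2 - sx)" using diff_x pos by (simp add: field_simps)
  finally show ?thesis by (simp add: s2_def sx_def sy_def)
qed

lemma omega_minus_eq: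
  "omega_minus v1 v2 w1 w2 t =
     sqrt (((2*v1 + w1) + (2*v2 + w2)
            - sqrt (((2*v1 + w1) - (2*v2 + w2))^2 + (8*v1*v2) * (cos t + 1))) / 2)"
  unfolding omega_minus_def Let_def by (simp add: algebra_simps)

lemma omega_minus_double_angle_less:
  fixes v1 v2 w1 w2 t :: real
  assumes "v1 > 0" "v2 > 0" "w1 > 0" "w2 > 0"
  shows "omega_minus v1 v2 w1 w2 (2*t) < 2 * omega_minus v1 v2 w1 w2 t"
proof -
  define c1 where "c1 = 2*v1 + w1"
  define c2 where "c2 = 2*v2 + w2"
  define D where "D = (c1 - c2)^2"
  define k where "k = 8*v1*v2"
  define x where "x = cos t + 1"
  have k_pos: "k > 0" using assms by (simp add: k_def)
  have x_range: "0 \<le> x" "x \<le> 2"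
    using cos_ge_minus_one[of t] cos_le_one[of t] unfolding x_def by linarith+
  have cos_double: "cos (2*t) + 1 = 2*(x - 1)^2" by (simp add: x_def cos_double_cos)
  have "D + 2*k < (c1 + c2)^2"
    using assms by (simp add: D_def k_def c1_def c2_def power2_eq_square algebra_simps
        add_pos_pos mult_pos_pos)
  then have sqrt_below_sum: "sqrt (D + 2*k) < c1 + c2"
    using assms by (intro real_less_lsqrt) (simp_all add: c1_def c2_def)
  have "4 * sqrt (D + k*x) \<le> 3 * sqrt (D + 2*k) + sqrt (D + k*(2*(x - 1)^2))"
    using sqrt_double_angle_bound[OF _ k_pos x_range] by (simp add: D_def mult_ac)
  with sqrt_below_sum have "(c1 + c2 - sqrt (D + k*(2*(x - 1)^2))) / 2
                   < 4 * ((c1 + c2 - sqrt (D + k*x)) / 2)"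
    by (simp add: field_simps)
  then have "sqrt ((c1 + c2 - sqrt (D + k*(2*(x - 1)^2))) / 2)
               < sqrt (4 * ((c1 + c2 - sqrt (D + k*x)) / 2))"
    by simp
  also have "\<dots> = 2 * sqrt ((c1 + c2 - sqrt (D + k*x)) / 2)"
    by (subst real_sqrt_mult) simp
  finally have "sqrt ((c1 + c2 - sqrt (D + k*(2*(x - 1)^2))) / 2)
                  < 2 * sqrt ((c1 + c2 - sqrt (D + k*x)) / 2)" .
  then show ?thesis
    by (simp add: omega_minus_eq flip: cos_double c1_def c2_def D_def k_def x_def)
qed

theorem mainTheorem3:
  fixes a \<gamma> b :: real
  assumes "a > 0" and "\<gamma> > 1" and "b > 0"
  shows "\<forall>\<theta>\<in>{-pi<..pi}.
           2 * omega_minus a (\<gamma> * a) b b \<theta> \<noteq> omega_minus a (\<gamma> * a) b b (2 * \<theta>)"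
proof
  fix \<theta> :: real
  have "\<gamma> * a > 0" using assms by simp
  then have "omega_minus a (\<gamma> * a) b b (2 * \<theta>) < 2 * omega_minus a (\<gamma> * a) b b \<theta>"
    using assms by (intro omega_minus_double_angle_less) auto
  then show "2 * omega_minus a (\<gamma> * a) b b \<theta> \<noteq> omega_minus a (\<gamma> * a) b b (2 * \<theta>)"
    by simp
qed

end
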